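(* Let $a,b\ge 2$ and $c\ge 1$ be integers and set $d=ab-1$. Then $$\mathcal{G}_{(cd+a)}\subset \overline{\mathcal{G}_{(cd-1,\,b,\,a)}}.$$
   Context: $\mathcal{G}$ denotes the group of polynomial automorphisms of the complex affine plane $\mathbb{A}^2_{\mathbb{C}}=\mathrm{Spec}(\mathbb{C}[X,Y])$; an element is a pair $(f,g)\in\mathbb{C}[X,Y]^2$ with $\mathbb{C}[f,g]=\mathbb{C}[X,Y]$, and its degree is $\max\{\deg f,\deg g\}$. Affine automorphisms are those of degree $1$; triangular automorphisms are those of the form $(\alpha X+P(Y),\beta Y+\gamma)$ with $\alpha,\beta\in\mathbb{C}^*$, $\gamma\in\mathbb{C}$, $P\in\mathbb{C}[Y]$. By the Jung–van der Kulk theorem, $\mathcal{G}$ is the amalgamated free product of the affine and triangular subgroups along their intersection, so every non-affine automorphism has a reduced decomposition as an alternating product of affine and non-affine triangular automorphisms, and the sequence $(d_1,\dots,d_l)$ of degrees (all $\ge 2$) of the triangular factors is uniquely determined; it is called the polydegree. For a sequence $(d_1,\dots,d_l)$ of integers $\ge2$, $\mathcal{G}_{(d_1,\dots,d_l)}$ is the set of automorphisms with polydegree $(d_1,\dots,d_l)$; in particular $\mathcal{G}_{(n)}$ is the set of triangular automorphisms (composed with affine ones) of polydegree $(n)$. $\mathcal{G}$ carries the structure of an infinite-dimensional algebraic variety (in the sense of Shafarevich), and $\overline{\mathcal{H}}$ denotes the closure of a subset $\mathcal{H}\subset\mathcal{G}$ for the associated Zariski topology. *)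

theory Defs
  imports "HOL-Computational_Algebra.Polynomial"
begin

text \<open>Bivariate polynomials C[X,Y] represented as C[X][Y]:
  the outer variable is Y, the coefficients are polynomials in X.\<close>
type_synonym bpoly = "complex poly poly"

type_synonym aut = "bpoly \<times> bpoly"

definition const2 :: "complex \<Rightarrow> bpoly" where
  "const2 c = [:[:c:]:]"

definition varX :: bpoly where "varX = [:[:0, 1:]:]"
definition varY :: bpoly where "varY = [:0, 1:]"

definition bieval :: "bpoly \<Rightarrow> bpoly \<Rightarrow> bpoly \<Rightarrow> bpoly" where
  "bieval p f g = poly (map_poly (\<lambda>q. poly (map_poly const2 q) f) p) g"

definition tdeg :: "bpoly \<Rightarrow> nat" where
  "tdeg p = (if p = 0 then 0
     else Max ((\<lambda>i. degree (coeff p i) + i) ` {i. i \<le> degree p \<and> coeff p i \<noteq> 0}))"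

definition aut_deg :: "aut \<Rightarrow> nat" where
  "aut_deg \<phi> = max (tdeg (fst \<phi>)) (tdeg (snd \<phi>))"

definition is_aut :: "aut \<Rightarrow> bool" where
  "is_aut \<phi> \<longleftrightarrow> (\<exists>u v. bieval u (fst \<phi>) (snd \<phi>) = varX \<and> bieval v (fst \<phi>) (snd \<phi>) = varY)"

definition GG :: "aut set" where
  "GG = {\<phi>. is_aut \<phi>}"

definition comp_aut :: "aut \<Rightarrow> aut \<Rightarrow> aut" where
  "comp_aut \<phi> \<psi> = (bieval (fst \<phi>) (fst \<psi>) (snd \<psi>), bieval (snd \<phi>) (fst \<psi>) (snd \<psi>))"

definition id_aut :: aut where "id_aut = (varX, varY)"

definition comp_list :: "aut list \<Rightarrow> aut" where
  "comp_list xs = foldr comp_aut xs id_aut"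

text \<open>c + a X + b Y\<close>
definition lin :: "complex \<Rightarrow> complex \<Rightarrow> complex \<Rightarrow> bpoly" where
  "lin a b c = [:[:c, a:], [:b:]:]"

definition affine_aut :: "aut set" where
  "affine_aut = {(lin a1 b1 c1, lin a2 b2 c2) | a1 b1 c1 a2 b2 c2.
                    a1 * b2 - a2 * b1 \<noteq> 0}"

text \<open>Triangular automorphisms (alpha X + P(Y), beta Y + gamma).\<close>
definition triang_P :: "complex \<Rightarrow> complex poly \<Rightarrow> complex \<Rightarrow> complex \<Rightarrow> aut" where
  "triang_P \<alpha> P \<beta> \<gamma> = ([:[:0, \<alpha>:]:] + map_poly (\<lambda>c. [:c:]) P, lin 0 \<beta> \<gamma>)"

definition triangular_aut :: "aut set" where
  "triangular_aut = {triang_P \<alpha> P \<beta> \<gamma> | \<alpha> P \<beta> \<gamma>. \<alpha> \<noteq> 0 \<and> \<beta> \<noteq> 0}"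

definition triangular_deg :: "nat \<Rightarrow> aut set" where
  "triangular_deg n = {triang_P \<alpha> P \<beta> \<gamma> | \<alpha> P \<beta> \<gamma>. \<alpha> \<noteq> 0 \<and> \<beta> \<noteq> 0 \<and> degree P = n}"

fun interleave :: "'a list \<Rightarrow> 'a list \<Rightarrow> 'a list" where
  "interleave (a # as) (t # ts) = a # t # interleave as ts"
| "interleave as [] = as"
| "interleave [] ts = ts"

text \<open>G_(d_1,...,d_l): automorphisms admitting a reduced decomposition
  a_1 t_1 a_2 t_2 ... a_l t_l a_(l+1) with a_i affine, t_i triangular of degree d_i,
  and a_2,...,a_l not triangular.\<close>
definition Gpd :: "nat list \<Rightarrow> aut set" where
  "Gpd ds = {comp_list (interleave as ts) | as ts.
       length as = length ds + 1 \<and> length ts = length ds \<and>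
       (\<forall>i < length as. as ! i \<in> affine_aut) \<and>
       (\<forall>i < length ts. ts ! i \<in> triangular_deg (ds ! i)) \<and>
       (\<forall>i. 0 < i \<and> i < length ds \<longrightarrow> as ! i \<notin> triangular_aut)}"

text \<open>Coefficients: coords phi (k,i,j) = coefficient of X^i Y^j in the first (k=True)
  or second (k=False) component.\<close>
definition coords :: "aut \<Rightarrow> (bool \<times> nat \<times> nat) \<Rightarrow> complex" where
  "coords \<phi> = (\<lambda>(k, i, j). coeff (coeff (if k then fst \<phi> else snd \<phi>) j) i)"

inductive polyfun :: "(('i \<Rightarrow> complex) \<Rightarrow> complex) \<Rightarrow> bool" where
  pf_const: "polyfun (\<lambda>x. c)"
| pf_var: "polyfun (\<lambda>x. x i)"
| pf_add: "polyfun p \<Longrightarrow> polyfun q \<Longrightarrow> polyfun (\<lambda>x. p x + q x)"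
| pf_mult: "polyfun p \<Longrightarrow> polyfun q \<Longrightarrow> polyfun (\<lambda>x. p x * q x)"

definition G_le :: "nat \<Rightarrow> aut set" where
  "G_le n = {\<phi> \<in> GG. aut_deg \<phi> \<le> n}"

text \<open>Ind-Zariski topology: F is closed iff F \<inter> G_{\<le>n} is Zariski closed in G_{\<le>n} for all n.\<close>
definition zclosed :: "aut set \<Rightarrow> bool" where
  "zclosed F \<longleftrightarrow> F \<subseteq> GG \<and>
     (\<forall>n. \<exists>S. (\<forall>p\<in>S. polyfun p) \<and>
          F \<inter> G_le n = {\<phi> \<in> G_le n. \<forall>p\<in>S. p (coords \<phi>) = 0})"

definition zclosure :: "aut set \<Rightarrow> aut set" where
  "zclosure H = \<Inter> {F. zclosed F \<and> H \<subseteq> F}"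

end

(*
  An element of G_(cd+a) has the form A0 o (X + T(Y), Y) o A1 with A0, A1 affine and deg T = cd + a.
  For e <> 0 and sigma the swap of coordinates, the composite
    A0 o (X + P_e(Y), Y) o sigma o (X + (-1)^b e^(bc+1) Y^b, Y) o sigma o (X - e^-c V(Y), Y) o A1
  has polydegree (cd - 1, b, a) when deg V = a and deg P_e = cd - 1.  Writing A1 = (x0, y0), it equals
  A0 o (x0 - e^-c V(y0) + P_e(y_e), y_e) with y_e = y0 + e (V(y0) - e^c x0)^b.  Take
  P_e = sum_(k<c) e^(k-c) U_k + R + e Y^(cd-1), where the U_k are the Lagrange inversion terms of V
  for W = V^b: the identity sum_k t^k U_k(y + t W(y)) = V(y) cancels the poles in e, so the family
  is a polynomial curve in e, with value A0 o (X + R(Y) - U_c(Y), Y) o A1 at e = 0.  Choosing V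
  (by extracting an m-th root, m = bc + 1) so that the top a + 1 coefficients of U_c and T cancel,
  R = T + U_c has degree at most cd - 1 and the value at 0 is the given element.  Finally, a
  polynomial in e vanishing for infinitely many e vanishes at 0, so limits of polynomial curves lie
  in the Zariski closure.
*)

theory Submission
  imports Defs "HOL-Computational_Algebra.Polynomial_FPS"
begin

lemma const2_0 [simp]: "const2 0 = 0" by (simp add: const2_def)
lemma const2_1 [simp]: "const2 1 = 1" by (simp add: const2_def one_pCons)
lemma const2_add: "const2 (a + b) = const2 a + const2 b" by (simp add: const2_def)
lemma const2_mult: "const2 (a * b) = const2 a * const2 b" by (simp add: const2_def)
lemma const2_uminus: "const2 (- a) = - const2 a" by (simp add: const2_def)
lemma const2_power: "const2 (a ^ n) = const2 a ^ n"
  by (induction n) (simp_all add: const2_mult)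
lemma const2_eq_0_iff [simp]: "const2 a = 0 \<longleftrightarrow> a = 0" by (simp add: const2_def)
lemma coeff_coeff_const2_mult: "coeff (coeff (const2 c * p) j) i = c * coeff (coeff p j) i"
  by (simp add: const2_def)

context
  fixes h :: "'a::comm_ring_1 \<Rightarrow> 'b::comm_ring_1"
  assumes h_0: "h 0 = 0" and h_add: "\<And>x y. h (x + y) = h x + h y"
begin

lemma poly_map_poly_add: "poly (map_poly h (p + q)) z = poly (map_poly h p) z + poly (map_poly h q) z"
proof -
  have "map_poly h (p + q) = map_poly h p + map_poly h q"
    by (intro poly_eqI) (simp add: coeff_map_poly h_0 h_add)
  then show ?thesis by simp
qed

lemma poly_map_poly_uminus: "poly (map_poly h (- p)) z = - poly (map_poly h p) z"
proof -
  have "poly (map_poly h (p + - p)) z = 0" by simp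
  then show ?thesis by (simp only: poly_map_poly_add) (simp add: add_eq_0_iff2)
qed

lemma poly_map_poly_diff: "poly (map_poly h (p - q)) z = poly (map_poly h p) z - poly (map_poly h q) z"
  using poly_map_poly_add[of p "- q" z] poly_map_poly_uminus[of q z] by simp

lemma poly_map_poly_sum: "poly (map_poly h (sum f A)) z = (\<Sum>x\<in>A. poly (map_poly h (f x)) z)"
  by (induction A rule: infinite_finite_induct) (simp_all add: poly_map_poly_add)

lemma poly_map_poly_const: "poly (map_poly h [:c:]) z = h c"
  by (simp add: map_poly_pCons h_0)

lemma poly_map_poly_monom: "poly (map_poly h (monom c n)) z = h c * z ^ n"
  by (simp add: map_poly_monom h_0 poly_monom)

context
  assumes h_mult: "\<And>x y. h (x * y) = h x * h y"
begin

lemma poly_map_poly_smult: "poly (map_poly h (smult c p)) z = h c * poly (map_poly h p) z"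
  by (simp add: map_poly_smult h_0 h_mult)

lemma poly_map_poly_mult: "poly (map_poly h (p * q)) z = poly (map_poly h p) z * poly (map_poly h q) z"
proof (induction p)
  case (pCons a p)
  have "pCons a p * q = smult a q + pCons 0 (p * q)" by simp
  then show ?case
    by (simp only: poly_map_poly_add poly_map_poly_smult)
       (simp add: map_poly_pCons h_0 pCons.IH algebra_simps)
qed simp

lemma poly_map_poly_power:
  assumes "h 1 = 1"
  shows "poly (map_poly h (p ^ n)) z = poly (map_poly h p) z ^ n"
  by (induction n) (simp_all add: assms poly_map_poly_mult)

end

end

definition ueval :: "complex poly \<Rightarrow> bpoly \<Rightarrow> bpoly" where
  "ueval u y = poly (map_poly const2 u) y"

lemmas const2_hom = const2_0 const2_add const2_mult const2_1

lemma ueval_0 [simp]: "ueval 0 y = 0" by (simp add: ueval_def)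
lemma ueval_1 [simp]: "ueval 1 y = 1" by (simp add: ueval_def)
lemma ueval_pCons: "ueval (pCons a u) y = const2 a + y * ueval u y"
  by (simp add: ueval_def map_poly_pCons)
lemma ueval_add: "ueval (p + q) y = ueval p y + ueval q y"
  unfolding ueval_def by (rule poly_map_poly_add) (simp_all add: const2_hom)
lemma ueval_uminus: "ueval (- p) y = - ueval p y"
  unfolding ueval_def by (rule poly_map_poly_uminus) (simp_all add: const2_hom)
lemma ueval_sum: "ueval (sum f A) y = (\<Sum>x\<in>A. ueval (f x) y)"
  unfolding ueval_def by (rule poly_map_poly_sum) (simp_all add: const2_hom)
lemma ueval_const: "ueval [:c:] y = const2 c"
  unfolding ueval_def by (rule poly_map_poly_const) (simp_all add: const2_hom)
lemma ueval_monom: "ueval (monom c n) y = const2 c * y ^ n"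
  unfolding ueval_def by (rule poly_map_poly_monom) (simp_all add: const2_hom)
lemma ueval_smult: "ueval (smult c p) y = const2 c * ueval p y"
  unfolding ueval_def by (rule poly_map_poly_smult) (simp_all add: const2_hom)
lemma ueval_mult: "ueval (p * q) y = ueval p y * ueval q y"
  unfolding ueval_def by (rule poly_map_poly_mult) (simp_all add: const2_hom)
lemma ueval_power: "ueval (p ^ n) y = ueval p y ^ n"
  unfolding ueval_def by (rule poly_map_poly_power) (simp_all add: const2_hom)

lemma ueval_varX: "ueval q varX = [:q:]"
  by (induction q) (simp_all add: ueval_pCons varX_def const2_def)

lemma bieval_eq_poly_ueval: "bieval p f g = poly (map_poly (\<lambda>q. ueval q f) p) g"
  by (simp add: bieval_def ueval_def)

lemma bieval_add: "bieval (p + q) f g = bieval p f g + bieval q f g"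
  unfolding bieval_eq_poly_ueval by (rule poly_map_poly_add) (simp_all add: ueval_add)
lemma bieval_diff: "bieval (p - q) f g = bieval p f g - bieval q f g"
  unfolding bieval_eq_poly_ueval by (rule poly_map_poly_diff) (simp_all add: ueval_add)
lemma bieval_mult: "bieval (p * q) f g = bieval p f g * bieval q f g"
  unfolding bieval_eq_poly_ueval by (rule poly_map_poly_mult) (simp_all add: ueval_add ueval_mult)
lemma bieval_pCons: "bieval (pCons q p) f g = ueval q f + g * bieval p f g"
  by (simp add: bieval_eq_poly_ueval map_poly_pCons)
lemma bieval_0 [simp]: "bieval 0 f g = 0" by (simp add: bieval_def)
lemma bieval_const2 [simp]: "bieval (const2 c) f g = const2 c"
  by (simp add: bieval_eq_poly_ueval const2_def map_poly_pCons ueval_const)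
lemma bieval_varX [simp]: "bieval varX f g = f"
  by (simp add: varX_def bieval_pCons ueval_pCons ueval_const)
lemma bieval_varY [simp]: "bieval varY f g = g"
  by (simp add: varY_def bieval_pCons)

lemma bieval_ueval: "bieval (ueval u w) f g = ueval u (bieval w f g)"
  by (induction u) (simp_all add: ueval_pCons bieval_add bieval_mult)

lemma bieval_varX_varY: "bieval p varX varY = p"
  by (induction p) (simp_all add: bieval_pCons ueval_varX varY_def)

lemma bieval_bieval: "bieval (bieval p f g) u v = bieval p (bieval f u v) (bieval g u v)"
  by (induction p) (simp_all add: bieval_pCons bieval_add bieval_mult bieval_ueval)

section \<open>Affine and triangular automorphisms\<close>

lemma lin_eq: "lin a b c = const2 c + const2 a * varX + const2 b * varY"
  by (simp add: lin_def const2_def varX_def varY_def)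

lemma bieval_lin: "bieval (lin a b c) f g = const2 c + const2 a * f + const2 b * g"
  by (simp add: lin_eq bieval_add bieval_mult)

lemma bieval_lin_lin:
  "bieval (lin a b c) (lin a1 b1 c1) (lin a2 b2 c2) = lin (a*a1 + b*a2) (a*b1 + b*b2) (c + a*c1 + b*c2)"
  by (simp only: bieval_lin) (simp add: lin_eq const2_add const2_mult algebra_simps)

lemma ueval_varY: "ueval P varY = map_poly (\<lambda>c. [:c:]) P"
  by (induction P) (simp_all add: ueval_pCons map_poly_pCons varY_def const2_def)

lemma triang_P_eq: "triang_P \<alpha> P \<beta> \<gamma> = (const2 \<alpha> * varX + ueval P varY, lin 0 \<beta> \<gamma>)"
  by (simp add: triang_P_def ueval_varY const2_def varX_def)

lemma comp_aut_lin:
  "comp_aut (lin a1 b1 c1, lin a2 b2 c2) (f, g) =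
     (const2 c1 + const2 a1 * f + const2 b1 * g, const2 c2 + const2 a2 * f + const2 b2 * g)"
  by (simp add: comp_aut_def bieval_lin)

lemma comp_aut_triang_P:
  "comp_aut (triang_P \<alpha> P \<beta> \<gamma>) (f, g) = (const2 \<alpha> * f + ueval P g, const2 \<gamma> + const2 \<beta> * g)"
  by (simp add: comp_aut_def triang_P_eq bieval_add bieval_mult bieval_ueval bieval_lin)

lemma comp_aut_id_aut: "comp_aut \<phi> id_aut = \<phi>"
  by (simp add: comp_aut_def id_aut_def bieval_varX_varY)

lemma comp_aut_assoc: "comp_aut (comp_aut \<phi> \<psi>) \<chi> = comp_aut \<phi> (comp_aut \<psi> \<chi>)"
  by (simp add: comp_aut_def bieval_bieval)

lemma is_aut_id_aut: "is_aut id_aut"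
  unfolding is_aut_def id_aut_def by (auto intro: bieval_varX bieval_varY)

lemma is_aut_comp_aut:
  assumes "is_aut \<phi>" "is_aut \<psi>"
  shows "is_aut (comp_aut \<phi> \<psi>)"
proof -
  obtain u1 v1 where \<phi>: "bieval u1 (fst \<phi>) (snd \<phi>) = varX" "bieval v1 (fst \<phi>) (snd \<phi>) = varY"
    using assms(1) unfolding is_aut_def by blast
  obtain u2 v2 where \<psi>: "bieval u2 (fst \<psi>) (snd \<psi>) = varX" "bieval v2 (fst \<psi>) (snd \<psi>) = varY"
    using assms(2) unfolding is_aut_def by blast
  let ?f = "fst (comp_aut \<phi> \<psi>)" and ?g = "snd (comp_aut \<phi> \<psi>)"
  have "bieval u1 ?f ?g = fst \<psi>" "bieval v1 ?f ?g = snd \<psi>"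
    using \<phi> by (simp_all add: comp_aut_def flip: bieval_bieval)
  then have "bieval (bieval u2 u1 v1) ?f ?g = varX" "bieval (bieval v2 u1 v1) ?f ?g = varY"
    by (simp_all add: bieval_bieval \<psi>)
  then show ?thesis unfolding is_aut_def by blast
qed

lemma is_aut_lin:
  assumes "a1 * b2 - a2 * b1 \<noteq> 0"
  shows "is_aut (lin a1 b1 c1, lin a2 b2 c2)"
proof -
  define D where "D = a1 * b2 - a2 * b1"
  have D: "D \<noteq> 0" using assms by (simp add: D_def)
  have "bieval (lin (b2/D) (-b1/D) ((b1*c2 - b2*c1)/D)) (lin a1 b1 c1) (lin a2 b2 c2) = lin 1 0 0"
       "bieval (lin (-a2/D) (a1/D) ((a2*c1 - a1*c2)/D)) (lin a1 b1 c1) (lin a2 b2 c2) = lin 0 1 0"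
    using D unfolding bieval_lin_lin by (simp_all add: lin_def divide_simps) (simp_all add: D_def algebra_simps)
  moreover have "lin 1 0 0 = varX" "lin 0 1 0 = varY" by (simp_all add: lin_def varX_def varY_def)
  ultimately show ?thesis unfolding is_aut_def by auto
qed

lemma is_aut_triang_P:
  assumes "\<alpha> \<noteq> 0" "\<beta> \<noteq> 0"
  shows "is_aut (triang_P \<alpha> P \<beta> \<gamma>)"
proof -
  let ?f = "fst (triang_P \<alpha> P \<beta> \<gamma>)" and ?g = "snd (triang_P \<alpha> P \<beta> \<gamma>)"
  let ?v = "lin 0 (1/\<beta>) (-\<gamma>/\<beta>)"
  have "bieval ?v ?f ?g = const2 (-\<gamma>/\<beta>) + const2 (1/\<beta>) * (const2 \<gamma> + const2 \<beta> * varY)"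
    unfolding bieval_lin by (simp add: triang_P_eq lin_eq)
  also have "\<dots> = varY"
    using assms by (simp add: algebra_simps flip: const2_mult const2_add)
  finally have v: "bieval ?v ?f ?g = varY" .
  have "bieval (const2 (1/\<alpha>) * (varX - ueval P ?v)) ?f ?g = const2 (1/\<alpha>) * (?f - ueval P varY)"
    by (simp only: bieval_mult bieval_diff bieval_ueval v bieval_const2 bieval_varX)
  also have "\<dots> = varX"
    using assms by (simp add: triang_P_eq mult.assoc[symmetric] flip: const2_mult)
  finally show ?thesis unfolding is_aut_def using v by blast
qed

lemma affine_aut_is_aut: "A \<in> affine_aut \<Longrightarrow> is_aut A"
  unfolding affine_aut_def using is_aut_lin by auto

lemma triangular_deg_is_aut: "t \<in> triangular_deg n \<Longrightarrow> is_aut t"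
  unfolding triangular_deg_def using is_aut_triang_P by auto

lemma triang_P_in_triangular_deg:
  "\<alpha> \<noteq> 0 \<Longrightarrow> \<beta> \<noteq> 0 \<Longrightarrow> triang_P \<alpha> P \<beta> \<gamma> \<in> triangular_deg (degree P)"
  unfolding triangular_deg_def by blast

lemma comp_aut_affine:
  assumes "A \<in> affine_aut" "B \<in> affine_aut"
  shows "comp_aut A B \<in> affine_aut"
proof -
  obtain a1 b1 c1 a2 b2 c2 where A: "A = (lin a1 b1 c1, lin a2 b2 c2)" "a1 * b2 - a2 * b1 \<noteq> 0"
    using assms(1) unfolding affine_aut_def by blast
  obtain p1 q1 r1 p2 q2 r2 where B: "B = (lin p1 q1 r1, lin p2 q2 r2)" "p1 * q2 - p2 * q1 \<noteq> 0"
    using assms(2) unfolding affine_aut_def by blast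
  have "(a1*p1 + b1*p2) * (a2*q1 + b2*q2) - (a2*p1 + b2*p2) * (a1*q1 + b1*q2)
      = (a1 * b2 - a2 * b1) * (p1 * q2 - p2 * q1)"
    by (simp add: algebra_simps)
  then have "(a1*p1 + b1*p2) * (a2*q1 + b2*q2) - (a2*p1 + b2*p2) * (a1*q1 + b1*q2) \<noteq> 0"
    using A(2) B(2) by simp
  moreover have "comp_aut A B = (lin (a1*p1 + b1*p2) (a1*q1 + b1*q2) (c1 + a1*r1 + b1*r2),
                                 lin (a2*p1 + b2*p2) (a2*q1 + b2*q2) (c2 + a2*r1 + b2*r2))"
    by (simp add: A B comp_aut_def bieval_lin_lin)
  ultimately show ?thesis unfolding affine_aut_def by blast
qed

lemma triang_P_normalize:
  assumes "\<alpha> \<noteq> 0"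
  shows "triang_P \<alpha> P \<beta> \<gamma> = comp_aut (lin \<alpha> 0 0, lin 0 \<beta> \<gamma>) (triang_P 1 (smult (1/\<alpha>) P) 1 0)"
  using assms
  by (simp only: triang_P_eq comp_aut_lin) (simp add: ueval_smult lin_eq algebra_simps flip: const2_mult)


lemma set_interleave: "set (interleave xs ys) \<subseteq> set xs \<union> set ys"
  by (induction xs ys rule: interleave.induct) auto

lemma is_aut_comp_list: "(\<And>\<phi>. \<phi> \<in> set xs \<Longrightarrow> is_aut \<phi>) \<Longrightarrow> is_aut (comp_list xs)"
  by (induction xs) (simp_all add: comp_list_def is_aut_id_aut is_aut_comp_aut)

lemma Gpd_subset_GG: "Gpd ds \<subseteq> GG"
proof
  fix \<psi> assume "\<psi> \<in> Gpd ds"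
  then obtain as ts where \<psi>: "\<psi> = comp_list (interleave as ts)"
    and as: "\<forall>i<length as. as ! i \<in> affine_aut" and ts: "\<forall>i<length ts. ts ! i \<in> triangular_deg (ds ! i)"
    unfolding Gpd_def by (smt (verit) mem_Collect_eq)
  have "is_aut \<phi>" if \<phi>: "\<phi> \<in> set (interleave as ts)" for \<phi>
  proof -
    consider "\<phi> \<in> set as" | "\<phi> \<in> set ts" using \<phi> set_interleave[of as ts] by blast
    then show ?thesis
      by cases (metis as ts in_set_conv_nth affine_aut_is_aut triangular_deg_is_aut)+
  qed
  then show "\<psi> \<in> GG"
    unfolding GG_def \<psi> by (simp add: is_aut_comp_list)
qed

lemma Gpd_singletonE:
  assumes "\<psi> \<in> Gpd [n]"
  obtains A0 x0 y0 T where "A0 \<in> affine_aut" "(x0, y0) \<in> affine_aut" "degree T = n"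
    "\<psi> = comp_aut A0 (x0 + ueval T y0, y0)"
proof -
  obtain as ts where h: "\<psi> = comp_list (interleave as ts)" "length as = 2" "length ts = 1"
    "\<forall>i<length as. as ! i \<in> affine_aut" "\<forall>i<length ts. ts ! i \<in> triangular_deg ([n] ! i)"
    using assms unfolding Gpd_def by auto
  obtain A x0 y0 where as: "as = [A, (x0, y0)]"
    using h(2) by (auto simp: numeral_2_eq_2 length_Suc_conv)
  obtain t where ts: "ts = [t]"
    using h(3) by (auto simp: length_Suc_conv)
  have A: "A \<in> affine_aut" "(x0, y0) \<in> affine_aut"
    using h(4) as by auto
  obtain \<alpha> P \<beta> \<gamma> where t: "t = triang_P \<alpha> P \<beta> \<gamma>" "\<alpha> \<noteq> 0" "\<beta> \<noteq> 0" "degree P = n"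
    using h(5) ts unfolding triangular_deg_def by auto
  define L where "L = (lin \<alpha> 0 0, lin 0 \<beta> \<gamma>)"
  have L: "L \<in> affine_aut"
    using t(2,3) unfolding L_def affine_aut_def by force
  have "\<psi> = comp_aut A (comp_aut (comp_aut L (triang_P 1 (smult (1/\<alpha>) P) 1 0)) (x0, y0))"
    unfolding h(1) as ts t(1) triang_P_normalize[OF t(2)] L_def by (simp add: comp_list_def comp_aut_id_aut)
  also have "\<dots> = comp_aut (comp_aut A L) (x0 + ueval (smult (1/\<alpha>) P) y0, y0)"
    by (simp add: comp_aut_assoc comp_aut_triang_P)
  finally have "\<psi> = comp_aut (comp_aut A L) (x0 + ueval (smult (1/\<alpha>) P) y0, y0)" .
  moreover have "degree (smult (1/\<alpha>) P) = n" using t(2,4) by simp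
  ultimately show thesis using that comp_aut_affine[OF A(1) L] A(2) by blast
qed

definition swap_aut :: aut where
  "swap_aut = (lin 0 1 0, lin 1 0 0)"

lemma swap_aut_affine: "swap_aut \<in> affine_aut"
  unfolding swap_aut_def affine_aut_def by force

lemma swap_aut_not_triangular: "swap_aut \<notin> triangular_aut"
  by (auto simp: swap_aut_def triangular_aut_def triang_P_def lin_def)

lemma comp_aut_swap_aut: "comp_aut swap_aut (f, g) = (g, f)"
  by (simp add: swap_aut_def comp_aut_lin)

lemma comp_list_swaps:
  "comp_list [A, triang_P 1 P1 1 0, swap_aut, triang_P 1 P2 1 0, swap_aut, triang_P 1 P3 1 0, (x, y)]
   = comp_aut A (x + ueval P3 y + ueval P1 (y + ueval P2 (x + ueval P3 y)), y + ueval P2 (x + ueval P3 y))"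
  by (simp add: comp_list_def comp_aut_id_aut comp_aut_triang_P comp_aut_swap_aut)

lemma comp_list_swaps_in_Gpd:
  assumes "A0 \<in> affine_aut" "A1 \<in> affine_aut"
  shows "comp_list [A0, triang_P 1 P1 1 0, swap_aut, triang_P 1 P2 1 0, swap_aut, triang_P 1 P3 1 0, A1]
    \<in> Gpd [degree P1, degree P2, degree P3]"
proof -
  let ?as = "[A0, swap_aut, swap_aut, A1]"
  let ?ts = "[triang_P 1 P1 1 0, triang_P 1 P2 1 0, triang_P 1 P3 1 0]"
  have "\<forall>i<length ?as. ?as ! i \<in> affine_aut"
    using assms swap_aut_affine by (auto simp: less_Suc_eq nth_Cons')
  moreover have "\<forall>i<length ?ts. ?ts ! i \<in> triangular_deg ([degree P1, degree P2, degree P3] ! i)"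
    by (auto simp: less_Suc_eq nth_Cons' intro: triang_P_in_triangular_deg)
  moreover have "\<forall>i. 0 < i \<and> i < 3 \<longrightarrow> ?as ! i \<notin> triangular_aut"
    using swap_aut_not_triangular by (auto simp: less_Suc_eq nth_Cons' numeral_3_eq_3)
  ultimately show ?thesis
    unfolding Gpd_def by (intro CollectI exI[of _ ?as] exI[of _ ?ts]) simp
qed


section \<open>Limits of polynomial curves\<close>

lemma tdeg_le:
  assumes "\<And>i j. coeff (coeff p j) i \<noteq> 0 \<Longrightarrow> i + j \<le> N"
  shows "tdeg p \<le> N"
proof (cases "p = 0")
  case False
  have "degree (coeff p j) + j \<le> N" if "coeff p j \<noteq> 0" for j
    using assms[where i="degree (coeff p j)" and j=j] that by simp
  moreover have "{i. i \<le> degree p \<and> coeff p i \<noteq> 0} \<noteq> {}"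
    using False by (metis (mono_tags) empty_iff leading_coeff_0_iff mem_Collect_eq order_refl)
  ultimately show ?thesis
    using False unfolding tdeg_def by (simp add: Max.boundedI)
qed (simp add: tdeg_def)

lemma coeff_coeff_le_tdeg:
  assumes "coeff (coeff p j) i \<noteq> 0"
  shows "i + j \<le> tdeg p"
proof -
  have "coeff p j \<noteq> 0" using assms by auto
  then have "degree (coeff p j) + j \<le> Max ((\<lambda>i. degree (coeff p i) + i) ` {i. i \<le> degree p \<and> coeff p i \<noteq> 0})"
    by (intro Max_ge) (auto intro: le_degree)
  moreover have "i \<le> degree (coeff p j)" using assms by (meson le_degree)
  ultimately show ?thesis using assms by (auto simp: tdeg_def)
qed

lemma coeff_coeff_poly_const2:
  "coeff (coeff (poly Q (const2 e)) j) i = poly (map_poly (\<lambda>z. coeff (coeff z j) i) Q) e"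
  by (induction Q) (simp_all add: map_poly_pCons coeff_coeff_const2_mult)

lemma tdeg_poly_const2_le: "tdeg (poly Q (const2 e)) \<le> (\<Sum>m\<le>degree Q. tdeg (coeff Q m))"
proof (rule tdeg_le)
  fix i j assume "coeff (coeff (poly Q (const2 e)) j) i \<noteq> 0"
  moreover have "coeff (coeff (poly Q (const2 e)) j) i = (\<Sum>m\<le>degree Q. e ^ m * coeff (coeff (coeff Q m) j) i)"
    by (simp add: poly_altdef coeff_sum mult.commute[of "coeff Q _"] coeff_coeff_const2_mult flip: const2_power)
  ultimately obtain m where m: "m \<le> degree Q" "coeff (coeff (coeff Q m) j) i \<noteq> 0"
    by (metis (no_types, lifting) atMost_iff mult_zero_right sum.neutral)
  have "i + j \<le> tdeg (coeff Q m)" using m(2) by (rule coeff_coeff_le_tdeg)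
  also have "\<dots> \<le> (\<Sum>m\<le>degree Q. tdeg (coeff Q m))"
    using m(1) by (intro member_le_sum) auto
  finally show "i + j \<le> (\<Sum>m\<le>degree Q. tdeg (coeff Q m))" .
qed

lemma polyfun_comp_poly:
  assumes "polyfun p" "\<And>i. (\<lambda>e. X e i) \<in> range poly"
  shows "(\<lambda>e. p (X e)) \<in> range poly"
  using assms(1)
proof induction
  case (pf_const c)
  have "(\<lambda>e. c) = poly [:c:]" by auto
  then show ?case by blast
next
  case (pf_add p q)
  then obtain r s where "(\<lambda>e. p (X e)) = poly r" "(\<lambda>e. q (X e)) = poly s" by blast
  then have "(\<lambda>e. p (X e) + q (X e)) = poly (r + s)" by (simp add: fun_eq_iff)
  then show ?case by blast
next
  case (pf_mult p q)
  then obtain r s where "(\<lambda>e. p (X e)) = poly r" "(\<lambda>e. q (X e)) = poly s" by blast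
  then have "(\<lambda>e. p (X e) * q (X e)) = poly (r * s)" by (simp add: fun_eq_iff)
  then show ?case by blast
qed (use assms(2) in simp)

definition poly_curve :: "(complex \<Rightarrow> aut) \<Rightarrow> bool" where
  "poly_curve \<phi> \<longleftrightarrow> (\<exists>Q1 Q2 :: bpoly poly. \<forall>e. \<phi> e = (poly Q1 (const2 e), poly Q2 (const2 e)))"

lemma poly_curve_coords:
  assumes "poly_curve \<phi>"
  shows "(\<lambda>e. coords (\<phi> e) idx) \<in> range poly"
proof -
  obtain Q1 Q2 where \<phi>: "\<And>e. \<phi> e = (poly Q1 (const2 e), poly Q2 (const2 e))"
    using assms unfolding poly_curve_def by blast
  obtain k i j where idx: "idx = (k, i, j)" by (cases idx) auto
  have "(\<lambda>e. coords (\<phi> e) idx) = poly (map_poly (\<lambda>z. coeff (coeff z j) i) (if k then Q1 else Q2))"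
    by (simp add: fun_eq_iff idx coords_def \<phi> coeff_coeff_poly_const2)
  then show ?thesis by blast
qed

lemma poly_curve_aut_deg_bounded:
  assumes "poly_curve \<phi>"
  obtains N where "\<And>e. aut_deg (\<phi> e) \<le> N"
proof -
  obtain Q1 Q2 where \<phi>: "\<And>e. \<phi> e = (poly Q1 (const2 e), poly Q2 (const2 e))"
    using assms unfolding poly_curve_def by blast
  show thesis
    using that[of "(\<Sum>m\<le>degree Q1. tdeg (coeff Q1 m)) + (\<Sum>m\<le>degree Q2. tdeg (coeff Q2 m))"]
      tdeg_poly_const2_le[of Q1] tdeg_poly_const2_le[of Q2]
    by (simp add: aut_deg_def \<phi> max_def add.commute trans_le_add1 trans_le_add2)
qed

lemma poly_curve_comp_affine:
  assumes "A \<in> affine_aut" "poly_curve \<phi>"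
  shows "poly_curve (\<lambda>e. comp_aut A (\<phi> e))"
proof -
  obtain a1 b1 c1 a2 b2 c2 where A: "A = (lin a1 b1 c1, lin a2 b2 c2)"
    using assms(1) unfolding affine_aut_def by blast
  obtain Q1 Q2 where \<phi>: "\<And>e. \<phi> e = (poly Q1 (const2 e), poly Q2 (const2 e))"
    using assms(2) unfolding poly_curve_def by blast
  let ?lin = "\<lambda>a b c. [:const2 c:] + smult (const2 a) Q1 + smult (const2 b) Q2"
  have "comp_aut A (\<phi> e) = (poly (?lin a1 b1 c1) (const2 e), poly (?lin a2 b2 c2) (const2 e))" for e
    by (simp add: A \<phi> comp_aut_lin)
  then show ?thesis unfolding poly_curve_def by blast
qed

text \<open>Each equation of a closed set, evaluated along the curve, is a polynomial in \<open>e\<close>; vanishing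
  for all \<open>e \<in> E\<close>, it vanishes at \<open>e = 0\<close>.\<close>

lemma poly_curve_limit_in_zclosure:
  assumes E: "infinite E" and H: "\<And>e. e \<in> E \<Longrightarrow> \<phi> e \<in> H"
    and GG: "\<phi> 0 \<in> GG" and \<phi>: "poly_curve \<phi>"
  shows "\<phi> 0 \<in> zclosure H"
  unfolding zclosure_def
proof (intro InterI, clarify)
  fix F assume F: "zclosed F" "H \<subseteq> F"
  obtain N where N: "\<And>e. aut_deg (\<phi> e) \<le> N"
    using poly_curve_aut_deg_bounded[OF \<phi>] by blast
  obtain S where S: "\<forall>p\<in>S. polyfun p" "F \<inter> G_le N = {\<psi> \<in> G_le N. \<forall>p\<in>S. p (coords \<psi>) = 0}"
    using F(1) unfolding zclosed_def by blast
  have "p (coords (\<phi> 0)) = 0" if p: "p \<in> S" for p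
  proof -
    obtain r where r: "(\<lambda>e. p (coords (\<phi> e))) = poly r"
      using polyfun_comp_poly[where X="\<lambda>e. coords (\<phi> e)", OF S(1)[rule_format, OF p]]
        poly_curve_coords[OF \<phi>] by blast
    have "poly r e = 0" if "e \<in> E" for e
    proof -
      have "\<phi> e \<in> F \<inter> G_le N"
        using H[OF that] F N[of e] zclosed_def unfolding G_le_def by auto
      then have "p (coords (\<phi> e)) = 0" using S(2) p by blast
      then show ?thesis using r by (metis)
    qed
    then have "E \<subseteq> {e. poly r e = 0}" by blast
    then have "r = 0"
      using E poly_roots_finite[of r] finite_subset by auto
    then show ?thesis using r by (simp add: fun_eq_iff)
  qed
  moreover have "\<phi> 0 \<in> G_le N" using GG N[of 0] unfolding G_le_def by simp
  ultimately show "\<phi> 0 \<in> F" using S(2) by blast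
qed


section \<open>Taylor coefficients and Lagrange inversion\<close>

definition taylor_coeff :: "nat \<Rightarrow> complex poly \<Rightarrow> complex poly" where
  "taylor_coeff m u = smult (1 / fact m) ((pderiv ^^ m) u)"

lemma pderiv_pCons_0: "pderiv (pCons 0 u) = pCons 0 (pderiv u) + u"
  by (simp add: pderiv_pCons add.commute)

lemma higher_pderiv_pCons_0:
  "(pderiv ^^ Suc m) (pCons 0 u) = pCons 0 ((pderiv ^^ Suc m) u) + smult (of_nat (Suc m)) ((pderiv ^^ m) u)"
proof (induction m)
  case 0 then show ?case by (simp add: pderiv_pCons_0)
next
  case (Suc m)
  have "(pderiv ^^ Suc (Suc m)) (pCons 0 u) = pderiv ((pderiv ^^ Suc m) (pCons 0 u))" by simp
  also have "\<dots> = pCons 0 ((pderiv ^^ Suc (Suc m)) u) + smult (of_nat (Suc (Suc m))) ((pderiv ^^ Suc m) u)"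
    unfolding Suc by (simp add: pderiv_add pderiv_pCons_0 pderiv_smult algebra_simps smult_add_left)
  finally show ?case .
qed

lemma taylor_coeff_pCons_Suc:
  "taylor_coeff (Suc m) (pCons a u) = [:0,1:] * taylor_coeff (Suc m) u + taylor_coeff m u"
proof -
  have pc: "pCons a u = [:a:] + pCons 0 u" by simp
  have c0: "(pderiv ^^ Suc m) [:a:] = 0"
    by (induction m) (simp_all add: pderiv_pCons)
  have nz: "(of_nat (Suc m) :: complex) \<noteq> 0" by (simp del: of_nat_Suc)
  then have e: "of_nat (Suc m) / fact (Suc m) = (1 / fact m :: complex)"
    by (metis fact_Suc nonzero_divide_mult_cancel_left)
  show ?thesis unfolding taylor_coeff_def pc higher_pderiv_add c0 higher_pderiv_pCons_0
    using nz by (simp add: smult_add_right e del: of_nat_Suc)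
qed

lemma taylor_coeff_0: "taylor_coeff 0 u = u" by (simp add: taylor_coeff_def)

text \<open>The terms \<open>U\<^sub>k = (-1)\<^sup>k/k! D\<^sup>k\<^sup>-\<^sup>1(W\<^sup>k V')\<close> of the Lagrange inversion formula: as a formal
  identity in \<open>t\<close>, \<open>\<Sum>\<^sub>k t\<^sup>k U\<^sub>k(y + t W(y)) = V(y)\<close>.\<close>

definition lagrange_term :: "complex poly \<Rightarrow> complex poly \<Rightarrow> nat \<Rightarrow> complex poly" where
  "lagrange_term V W k = (if k = 0 then V else smult ((-1)^k / fact k) ((pderiv ^^ (k - 1)) (W ^ k * pderiv V)))"

lemma taylor_coeff_lagrange_term:
  assumes "k \<le> n" "1 \<le> n"
  shows "taylor_coeff (n - k) (lagrange_term V W k) = smult ((-1)^k / (fact k * fact (n - k))) ((pderiv ^^ (n - 1)) (W ^ k * pderiv V))"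
proof (cases "k = 0")
  case True
  have "(pderiv ^^ n) V = (pderiv ^^ (n - 1)) (pderiv V)"
    using assms by (metis Suc_diff_1 comp_apply funpow_Suc_right less_le_trans zero_less_one)
  then show ?thesis using True by (simp add: lagrange_term_def taylor_coeff_def)
next
  case False
  have "(pderiv ^^ (n - k)) ((pderiv ^^ (k - 1)) g) = (pderiv ^^ (n - 1)) g" for g :: "complex poly"
  proof -
    have "n - 1 = (n - k) + (k - 1)" using assms False by simp
    then show ?thesis by (simp add: funpow_add)
  qed
  then show ?thesis using False by (simp add: lagrange_term_def taylor_coeff_def higher_pderiv_smult ac_simps)
qed

lemma dvd_pderiv_power:
  fixes q :: "complex poly"
  assumes "pderiv q = 1" "q ^ Suc m dvd p"
  shows "q ^ m dvd pderiv p"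
proof -
  obtain r where r: "p = q ^ Suc m * r" using assms(2) by blast
  have "pderiv p = q ^ m * (q * pderiv r + smult (of_nat (Suc m)) r)"
    unfolding r pderiv_mult pderiv_power_Suc assms(1) by (simp add: algebra_simps)
  then show ?thesis by simp
qed

lemma dvd_higher_pderiv:
  fixes p :: "complex poly"
  assumes "[:-y0,1:] ^ Suc j dvd p"
  shows "[:-y0,1:] dvd (pderiv ^^ j) p"
  using assms
proof (induction j arbitrary: p)
  case 0 then show ?case by simp
next
  case (Suc j)
  have "[:-y0,1:] ^ Suc j dvd pderiv p"
    by (rule dvd_pderiv_power[OF _ Suc.prems]) (simp add: pderiv_pCons)
  then have "[:-y0,1:] dvd (pderiv ^^ j) (pderiv p)" by (rule Suc.IH)
  then show ?case by (simp only: funpow_Suc_right o_apply)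
qed

lemma const_minus_power:
  fixes W :: "'a::comm_ring_1 poly"
  shows "([:c:] - W) ^ n = (\<Sum>k\<le>n. smult (of_nat (n choose k) * (-1) ^ k * c ^ (n - k)) (W ^ k))"
proof -
  have "([:c:] - W) ^ n = (\<Sum>k\<le>n. of_nat (n choose k) * (- W) ^ k * [:c:] ^ (n - k))"
    using binomial_ring[of "- W" "[:c:]" n] by simp
  also have "\<dots> = (\<Sum>k\<le>n. smult (of_nat (n choose k) * (-1) ^ k * c ^ (n - k)) (W ^ k))"
  proof (intro sum.cong refl)
    fix k
    have "(- W) ^ k = smult ((-1) ^ k) (W ^ k)"
      by (metis smult_power minus_one_mult_self smult_1_left smult_minus_left)
    then show "of_nat (n choose k) * (- W) ^ k * [:c:] ^ (n - k) =
        smult (of_nat (n choose k) * (-1) ^ k * c ^ (n - k)) (W ^ k)"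
      by (simp add: poly_const_pow of_nat_poly mult.commute)
  qed
  finally show ?thesis .
qed

lemma lagrange_terms_taylor_sum:
  assumes "1 \<le> n"
  shows "(\<Sum>k\<le>n. taylor_coeff (n - k) (lagrange_term V W k) * W ^ (n - k)) = 0"
proof -
  have "poly (\<Sum>k\<le>n. taylor_coeff (n - k) (lagrange_term V W k) * W ^ (n - k)) y0 = 0" for y0
  proof -
    txt \<open>At \<open>y0\<close> the sum is \<open>D\<^sup>n\<^sup>-\<^sup>1((W(y0) - W)\<^sup>n V')(y0) / n!\<close>, which vanishes because
      \<open>(X - y0)\<^sup>n\<close> divides \<open>(W(y0) - W)\<^sup>n\<close>.\<close>
    define w0 where "w0 = poly W y0"
    define G where "G = ([:w0:] - W) ^ n * pderiv V"
    have "[:-y0, 1:] dvd [:w0:] - W" by (simp add: poly_eq_0_iff_dvd[symmetric] w0_def)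
    then have "[:-y0, 1:] ^ Suc (n - 1) dvd G"
      unfolding G_def using assms by (simp add: dvd_power_same)
    then have "[:-y0, 1:] dvd (pderiv ^^ (n - 1)) G" by (rule dvd_higher_pderiv)
    then have zero: "poly ((pderiv ^^ (n - 1)) G) y0 = 0" by (simp add: poly_eq_0_iff_dvd)
    have "poly ((pderiv ^^ (n - 1)) G) y0 =
       (\<Sum>k\<le>n. of_nat (n choose k) * (-1) ^ k * w0 ^ (n - k) * poly ((pderiv ^^ (n - 1)) (W ^ k * pderiv V)) y0)"
      by (simp add: G_def const_minus_power sum_distrib_right higher_pderiv_sum higher_pderiv_smult poly_sum)
    also have "\<dots> = fact n * poly (\<Sum>k\<le>n. taylor_coeff (n - k) (lagrange_term V W k) * W ^ (n - k)) y0"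
      unfolding poly_sum sum_distrib_left
    proof (intro sum.cong refl)
      fix k assume "k \<in> {..n}"
      then have k: "k \<le> n" by simp
      show "of_nat (n choose k) * (-1) ^ k * w0 ^ (n - k) * poly ((pderiv ^^ (n - 1)) (W ^ k * pderiv V)) y0 =
         fact n * poly (taylor_coeff (n - k) (lagrange_term V W k) * W ^ (n - k)) y0"
        unfolding taylor_coeff_lagrange_term[OF k assms] binomial_fact[OF k] poly_mult poly_smult poly_power w0_def
        by (simp only: times_divide_eq_left times_divide_eq_right mult_ac)
    qed
    finally show ?thesis using zero by simp
  qed
  then show ?thesis using poly_all_0_iff_0 by blast
qed

lemma degree_lagrange_term_le:
  assumes "degree V = a" "1 \<le> a * b"
  shows "degree (lagrange_term V (V ^ b) k) \<le> a + k * (a * b - 1)"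
proof (cases "k = 0")
  case True then show ?thesis using assms by (simp add: lagrange_term_def)
next
  case False
  let ?g = "(V ^ b) ^ k * pderiv V"
  have "degree ?g \<le> degree ((V ^ b) ^ k) + degree (pderiv V)" by (rule degree_mult_le)
  also have "\<dots> \<le> a * b * k + (a - 1)"
  proof (intro add_mono)
    have "degree ((V ^ b) ^ k) \<le> degree (V ^ b) * k" by (rule degree_power_le)
    also have "\<dots> \<le> (degree V * b) * k" by (intro mult_le_mono1 degree_power_le)
    finally show "degree ((V ^ b) ^ k) \<le> a * b * k" using assms by simp
    show "degree (pderiv V) \<le> a - 1" using assms by (simp add: degree_pderiv)
  qed
  finally have g: "degree ?g \<le> a * b * k + (a - 1)" .
  have "degree (lagrange_term V (V ^ b) k) \<le> degree ((pderiv ^^ (k - 1)) ?g)"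
    using False by (simp add: lagrange_term_def degree_smult_le)
  also have "\<dots> = degree ?g - (k - 1)" by (rule degree_higher_pderiv)
  also have "\<dots> \<le> a * b * k + (a - 1) - (k - 1)" using g by simp
  also have "\<dots> \<le> a + k * (a * b - 1)"
  proof -
    have "k \<le> a * b * k" using assms by simp
    moreover have "k * (a * b - 1) = a * b * k - k" by (simp add: diff_mult_distrib2 mult.commute)
    ultimately show ?thesis using False by simp
  qed
  finally show ?thesis .
qed

lemma coeff_lagrange_term:
  assumes "1 \<le> c"
  shows "coeff (lagrange_term V (V ^ b) c) j =
    (-1)^c / (fact c * of_nat (b * c + 1)) * pochhammer (of_nat (Suc j)) c * coeff (V ^ (b * c + 1)) (j + c)"
proof -
  have nz: "(of_nat (Suc (b * c)) :: complex) \<noteq> 0" by (simp del: of_nat_Suc)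
  have "pderiv (V ^ Suc (b * c)) = smult (of_nat (Suc (b * c))) (V ^ (b * c)) * pderiv V"
    by (rule pderiv_power_Suc)
  then have g: "(V ^ b) ^ c * pderiv V = smult (1 / of_nat (Suc (b * c))) (pderiv (V ^ Suc (b * c)))"
    using nz by (simp add: power_mult)
  have h: "(pderiv ^^ (c - 1)) (pderiv f) = (pderiv ^^ c) f" for f :: "complex poly"
    using assms by (metis Suc_diff_1 comp_apply funpow_Suc_right less_le_trans zero_less_one)
  have "lagrange_term V (V ^ b) c = smult ((-1)^c / fact c) ((pderiv ^^ (c - 1)) ((V ^ b) ^ c * pderiv V))"
    using assms by (simp add: lagrange_term_def)
  also have "\<dots> = smult ((-1)^c / fact c) (smult (1 / of_nat (Suc (b * c))) ((pderiv ^^ c) (V ^ Suc (b * c))))"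
    by (simp only: g higher_pderiv_smult h)
  finally have "coeff (lagrange_term V (V ^ b) c) j = (-1)^c / fact c * (1 / of_nat (Suc (b * c))) *
      (pochhammer (of_nat (Suc j)) c * coeff (V ^ Suc (b * c)) (j + c))"
    by (simp only: coeff_smult coeff_higher_pderiv mult.assoc)
  then show ?thesis by (simp del: of_nat_Suc)
qed

lemma coeff_lagrange_term_scaled:
  assumes "1 \<le> c"
  obtains \<kappa> :: "nat \<Rightarrow> complex"
  where "\<And>j. \<kappa> j \<noteq> 0" "\<And>V j. coeff (lagrange_term V (V ^ b) c) j = \<kappa> j * coeff (V ^ (b * c + 1)) (j + c)"
proof
  let ?\<kappa> = "\<lambda>j. (-1) ^ c / (fact c * of_nat (b * c + 1)) * pochhammer (of_nat (Suc j)) c :: complex"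
  show "?\<kappa> j \<noteq> 0" for j
    using pochhammer_pos[of "Suc j" c] by (simp add: pochhammer_of_nat del: of_nat_Suc)
  show "coeff (lagrange_term V (V ^ b) c) j = ?\<kappa> j * coeff (V ^ (b * c + 1)) (j + c)" for V j
    using coeff_lagrange_term[OF assms] by simp
qed

text \<open>\<open>ueval_poly u w\<close> is \<open>u(w(t))\<close> for a curve \<open>w\<close> in \<open>\<complex>[X,Y]\<close> given as a polynomial in \<open>t\<close>.\<close>

definition ueval_poly :: "complex poly \<Rightarrow> bpoly poly \<Rightarrow> bpoly poly" where
  "ueval_poly u w = poly (map_poly (\<lambda>c. [:const2 c:]) u) w"

lemma ueval_poly_0 [simp]: "ueval_poly 0 w = 0" by (simp add: ueval_poly_def)

lemma ueval_poly_pCons: "ueval_poly (pCons a u) w = [:const2 a:] + w * ueval_poly u w"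
  by (simp add: ueval_poly_def map_poly_pCons)

lemma poly_ueval_poly: "poly (ueval_poly u w) z = ueval u (poly w z)"
  by (induction u) (simp_all add: ueval_poly_pCons ueval_pCons)

lemma coeff_0_ueval_poly: "coeff (ueval_poly u w) 0 = ueval u (coeff w 0)"
  using poly_ueval_poly[of u w 0] by (simp add: poly_0_coeff_0)

lemma ueval_poly_diff_dvd: "w1 - w2 dvd ueval_poly u w1 - ueval_poly u w2"
proof (induction u)
  case (pCons a u)
  have "ueval_poly (pCons a u) w1 - ueval_poly (pCons a u) w2
      = (w1 - w2) * ueval_poly u w1 + w2 * (ueval_poly u w1 - ueval_poly u w2)"
    by (simp add: ueval_poly_pCons algebra_simps)
  then show ?case using pCons.IH by simp
qed simp

lemma coeff_ueval_poly_taylor: "coeff (ueval_poly u [:y, h:]) m = ueval (taylor_coeff m u) y * h ^ m"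
proof (induction u arbitrary: m)
  case (pCons a u)
  show ?case
  proof (cases m)
    case (Suc m')
    have "coeff (ueval_poly (pCons a u) [:y, h:]) m
       = y * coeff (ueval_poly u [:y, h:]) m + h * coeff (ueval_poly u [:y, h:]) m'"
      using Suc by (simp add: ueval_poly_pCons)
    also have "\<dots> = ueval (taylor_coeff m (pCons a u)) y * h ^ m"
      using Suc by (simp add: pCons.IH taylor_coeff_pCons_Suc ueval_add ueval_mult ueval_pCons algebra_simps)
    finally show ?thesis .
  qed (simp add: coeff_0_ueval_poly taylor_coeff_0)
qed (simp add: taylor_coeff_def)

lemma power_diff_dvd: "(x::'a::comm_ring_1) - y dvd x ^ n - y ^ n"
proof (induction n)
  case (Suc n)
  have "x ^ Suc n - y ^ Suc n = x * (x ^ n - y ^ n) + (x - y) * y ^ n" by (simp add: algebra_simps)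
  then show ?case using Suc.IH by simp
qed simp

lemma coeff_eq_0_if_monom_dvd:
  assumes "monom 1 n dvd q" "m < n"
  shows "coeff q m = 0"
  using assms by (auto simp: coeff_monom_mult elim!: dvdE)


section \<open>Prescribing the top coefficients of a power\<close>

unbundle fps_syntax

lemma fps_cutoff_power: "fps_cutoff n (fps_cutoff n f ^ m) = fps_cutoff n (f ^ m)"
proof (induction m)
  case (Suc m)
  have "(fps_cutoff n f ^ Suc m) $ k = (f ^ Suc m) $ k" if k: "k < n" for k
  proof -
    have "(fps_cutoff n f * fps_cutoff n f ^ m) $ k = (f * fps_cutoff n (fps_cutoff n f ^ m)) $ k"
      using k by (simp add: fps_cutoff_left_mult_nth fps_cutoff_right_mult_nth)
    also have "\<dots> = (f * f ^ m) $ k"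
      using k by (simp add: Suc.IH fps_cutoff_right_mult_nth)
    finally show ?thesis by simp
  qed
  then show ?case by (simp add: fps_cutoff_eq_fps_cutoff_iff)
qed simp

lemma reflect_poly_monom_1: "reflect_poly (monom 1 k) = 1"
  by (rule poly_eqI) (auto simp: coeff_reflect_poly degree_monom_eq coeff_monom)

lemma exists_complex_root:
  assumes "0 < m"
  obtains z :: complex where "z ^ m = w"
proof (cases "w = 0")
  case True
  then show thesis using that[of 0] assms by simp
next
  case False
  have "{z. z ^ m = 1} \<noteq> ({} :: complex set)" using power_one by blast
  then have "{z. z ^ m = w} \<noteq> ({} :: complex set)"
    using bij_betw_imp_surj_on[OF bij_betw_nth_root_unity[OF False assms]] by blast
  then show thesis using that by blast
qed

text \<open>The top coefficients of \<open>V\<^sup>m\<close> are the bottom coefficients of \<open>rev(V)\<^sup>m\<close>, so it suffices to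
  truncate an \<open>m\<close>-th root of the power series \<open>\<Sum>\<^sub>r w r t\<^sup>r\<close>.\<close>

lemma exists_poly_power_top_coeffs:
  fixes w :: "nat \<Rightarrow> complex"
  assumes "0 < m" "w 0 \<noteq> 0"
  obtains V :: "complex poly" where "degree V = a" "\<And>r. r \<le> a \<Longrightarrow> coeff (V ^ m) (a * m - r) = w r"
proof -
  obtain k where m: "m = Suc k" using assms(1) gr0_conv_Suc by blast
  obtain v0 where v0: "v0 ^ m = w 0" using exists_complex_root assms(1) by blast
  define F where "F = fps_radical (\<lambda>_ _. v0) m (Abs_fps w)"
  have F_power: "F ^ m = Abs_fps w"
    using power_radical[of "Abs_fps w" "\<lambda>_ _. v0" k] v0 assms(2) by (simp add: F_def m)
  define q where "q = truncate_fps (Suc a) F"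
  have q0: "coeff q 0 \<noteq> 0"
    using v0 assms by (auto simp: q_def F_def m)
  have dq: "degree q \<le> a"
    using degree_truncate_fps[of "Suc a" F] by (simp add: q_def)
  define V where "V = monom 1 (a - degree q) * reflect_poly q"
  have "q \<noteq> 0" using q0 by auto
  then have V: "degree V = a" "V \<noteq> 0"
    using q0 dq by (simp_all add: V_def degree_mult_eq degree_monom_eq)
  have "coeff (V ^ m) (a * m - r) = w r" if r: "r \<le> a" for r
  proof -
    have "r \<le> a * m" using r m by simp
    then have "coeff (V ^ m) (a * m - r) = coeff (reflect_poly (V ^ m)) r"
      using V by (simp add: coeff_reflect_poly degree_power_eq mult.commute)
    also have "\<dots> = coeff (q ^ m) r"
      using q0 by (simp add: V_def reflect_poly_power reflect_poly_mult reflect_poly_monom_1)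
    also have "\<dots> = (fps_cutoff (Suc a) F ^ m) $ r"
      by (simp add: q_def fps_of_poly_power flip: fps_of_poly_nth)
    also have "\<dots> = fps_cutoff (Suc a) (F ^ m) $ r"
      using r fps_cutoff_power[of "Suc a" F m] fps_cutoff_nth by (metis le_imp_less_Suc)
    finally show ?thesis using r by (simp add: F_power)
  qed
  then show thesis using that V(1) by blast
qed

lemma exists_cancelling_lagrange_term:
  fixes T :: "complex poly"
  assumes T: "degree T = c * d + a" and ab: "a * b = d + 1" and c: "1 \<le> c" and d: "1 \<le> d"
  obtains V where "degree V = a" "degree (T + lagrange_term V (V ^ b) c) \<le> c * d - 1"
proof -
  define n where "n = c * d + a"
  define m where "m = b * c + 1"
  have "a * m = (a * b) * c + a" by (simp add: m_def algebra_simps)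
  then have am: "a * m = n + c" by (simp add: ab n_def algebra_simps)
  obtain \<kappa> where \<kappa>: "\<And>j. \<kappa> j \<noteq> 0"
    and coeff_U: "\<And>V j. coeff (lagrange_term V (V ^ b) c) j = \<kappa> j * coeff (V ^ m) (j + c)"
    using coeff_lagrange_term_scaled[OF c, of b] unfolding m_def by blast
  define w where "w r = - coeff T (n - r) / \<kappa> (n - r)" for r
  have "T \<noteq> 0" using T c d by auto
  then have "coeff T n \<noteq> 0" using T by (simp add: n_def flip: T)
  then have "w 0 \<noteq> 0" using \<kappa> by (simp add: w_def)
  then obtain V where V: "degree V = a" "\<And>r. r \<le> a \<Longrightarrow> coeff (V ^ m) (a * m - r) = w r"
    using exists_poly_power_top_coeffs[of m w a] by (auto simp: m_def)
  let ?U = "lagrange_term V (V ^ b) c"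
  have "degree ?U \<le> n"
    using degree_lagrange_term_le[OF V(1), of b c] ab by (simp add: n_def mult.commute)
  have "degree (T + ?U) \<le> c * d - 1"
  proof (rule degree_le, intro allI impI)
    fix j assume j: "c * d - 1 < j"
    show "coeff (T + ?U) j = 0"
    proof (cases "j \<le> n")
      case True
      define r where "r = n - j"
      have r: "r \<le> a" "n - r = j" "j + c = a * m - r"
        using True j c d am by (auto simp: r_def n_def)
      have "coeff ?U j = - coeff T j"
        using coeff_U[of V j] V(2)[OF r(1)] \<kappa>[of j] by (simp add: r w_def)
      then show ?thesis by simp
    next
      case False
      then show ?thesis using T \<open>degree ?U \<le> n\<close> by (simp add: coeff_eq_0 n_def)
    qed
  qed
  then show thesis using that V(1) by blast
qed

lemma degree_lagrange_term_low:
  assumes "degree V = a" "a * b = d + 1" "a + 1 \<le> d" "k < c"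
  shows "degree (lagrange_term V (V ^ b) k) \<le> c * d - 1"
proof -
  have "degree (lagrange_term V (V ^ b) k) \<le> a + k * d"
    using degree_lagrange_term_le[OF assms(1), of b k] assms(2) by simp
  also have "\<dots> \<le> a + (c - 1) * d"
    using assms(4) by (intro add_left_mono mult_le_mono1) linarith
  also have "\<dots> \<le> c * d - 1"
    using assms(3,4) by (cases c) auto
  finally show ?thesis .
qed


section \<open>The degenerating family\<close>

locale degeneration =
  fixes V R :: "complex poly" and b c N :: nat and x0 y0 :: bpoly
  assumes c_pos: "1 \<le> c"
begin

definition U :: "nat \<Rightarrow> complex poly" where
  "U k = lagrange_term V (V ^ b) k"

text \<open>For \<open>t = e \<noteq> 0\<close>, \<open>(curve_x(t), curve_y(t))\<close> is the image of \<open>(x0, y0)\<close> under a map of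
  polydegree \<open>(N, b, deg V)\<close> (\<open>comp_list_outer_middle_inner\<close>); \<open>curve_x_scaled = t\<^sup>c curve_x\<close>.\<close>

definition curve_y :: "bpoly poly" where
  "curve_y = [:y0:] + monom 1 1 * ([:ueval V y0:] - monom x0 c) ^ b"

definition curve_x_scaled :: "bpoly poly" where
  "curve_x_scaled = monom x0 c - [:ueval V y0:] + (\<Sum>k<c. monom 1 k * ueval_poly (U k) curve_y)
     + monom 1 c * ueval_poly R curve_y + monom 1 (Suc c) * ueval_poly (monom 1 N) curve_y"

definition curve_x :: "bpoly poly" where
  "curve_x = poly_shift c curve_x_scaled"

lemma coeff_0_curve_y: "coeff curve_y 0 = y0"
  by (simp add: curve_y_def coeff_monom_mult)

lemma curve_y_approx: "monom 1 (Suc c) dvd curve_y - [:y0, ueval (V ^ b) y0:]"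
proof -
  let ?V0 = "[:ueval V y0:]"
  have "(?V0 - monom x0 c) - ?V0 dvd (?V0 - monom x0 c) ^ b - ?V0 ^ b"
    by (rule power_diff_dvd)
  moreover have "(?V0 - monom x0 c) - ?V0 = monom 1 c * [:- x0:]"
    by (simp add: monom_altdef)
  ultimately have "monom 1 1 * monom 1 c dvd monom 1 1 * ((?V0 - monom x0 c) ^ b - ?V0 ^ b)"
    by (metis dvd_mult_left mult_dvd_mono dvd_refl)
  moreover have "curve_y - [:y0, ueval (V ^ b) y0:] = monom 1 1 * ((?V0 - monom x0 c) ^ b - ?V0 ^ b)"
    by (simp add: curve_y_def ueval_power poly_const_pow monom_altdef algebra_simps)
  ultimately show ?thesis by (simp add: mult_monom)
qed

lemma coeff_ueval_poly_curve_y: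
  assumes "m \<le> c"
  shows "coeff (ueval_poly u curve_y) m = ueval (taylor_coeff m u * (V ^ b) ^ m) y0"
proof -
  let ?y1 = "[:y0, ueval (V ^ b) y0:]"
  have "monom 1 (Suc c) dvd ueval_poly u curve_y - ueval_poly u ?y1"
    by (rule dvd_trans[OF curve_y_approx ueval_poly_diff_dvd])
  then have "coeff (ueval_poly u curve_y - ueval_poly u ?y1) m = 0"
    using assms by (intro coeff_eq_0_if_monom_dvd) auto
  then show ?thesis
    by (simp add: coeff_ueval_poly_taylor ueval_mult ueval_power)
qed

text \<open>Up to order \<open>t\<^sup>c\<close>, \<open>curve_y = y0 + t W(y0)\<close>, so the Lagrange inversion identity collapses
  \<open>\<Sum>\<^sub>k\<^sub><\<^sub>c t\<^sup>k U\<^sub>k(curve_y)\<close> to \<open>V(y0) - t\<^sup>c U\<^sub>c(y0)\<close>.\<close>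

lemma coeff_lagrange_sum:
  assumes "n \<le> c"
  shows "coeff (\<Sum>k<c. monom 1 k * ueval_poly (U k) curve_y) n
    = (if n = 0 then ueval V y0 else if n = c then - ueval (U c) y0 else 0)"
proof -
  let ?t = "\<lambda>k. taylor_coeff (n - k) (U k) * (V ^ b) ^ (n - k)"
  have "coeff (\<Sum>k<c. monom 1 k * ueval_poly (U k) curve_y) n
      = (\<Sum>k<c. if n < k then 0 else ueval (?t k) y0)"
    unfolding coeff_sum coeff_monom_mult using assms by (intro sum.cong refl) (simp add: coeff_ueval_poly_curve_y)
  also have "\<dots> = (\<Sum>k\<in>{..n} - {c}. ueval (?t k) y0)"
    using assms by (intro sum.mono_neutral_cong_right) auto
  also have "\<dots> = ueval (\<Sum>k\<in>{..n} - {c}. ?t k) y0"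
    by (simp add: ueval_sum)
  also have "(\<Sum>k\<in>{..n} - {c}. ?t k) = (if n = 0 then V else if n = c then - U c else 0)"
  proof (cases "n = 0")
    case True
    then have "{..n} - {c} = {0}" using c_pos by auto
    then show ?thesis using True by (simp add: U_def lagrange_term_def taylor_coeff_0)
  next
    case False
    have "(\<Sum>k\<le>n. ?t k) = 0"
      unfolding U_def using False by (intro lagrange_terms_taylor_sum) simp
    then show ?thesis
      using False assms by (cases "n = c") (simp_all add: sum_diff1 taylor_coeff_0)
  qed
  finally show ?thesis by (simp add: ueval_uminus)
qed

lemma coeff_curve_x_scaled:
  assumes "n \<le> c"
  shows "coeff curve_x_scaled n = (if n = c then x0 + ueval R y0 - ueval (U c) y0 else 0)"
  using assms c_pos
  by (auto simp: curve_x_scaled_def coeff_lagrange_sum coeff_monom_mult coeff_0_ueval_poly coeff_0_curve_y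
      coeff_pCons split: nat.split)

lemma curve_x_scaled_eq: "curve_x_scaled = monom 1 c * curve_x"
proof (rule poly_eqI)
  fix n
  show "coeff curve_x_scaled n = coeff (monom 1 c * curve_x) n"
  proof (cases "n < c")
    case True
    then show ?thesis using coeff_curve_x_scaled[of n] by (simp add: coeff_monom_mult)
  qed (simp add: coeff_monom_mult curve_x_def coeff_poly_shift)
qed

lemma coeff_0_curve_x: "coeff curve_x 0 = x0 + ueval R y0 - ueval (U c) y0"
  using coeff_curve_x_scaled[of c] by (simp add: curve_x_def coeff_poly_shift)

definition outer_poly :: "complex \<Rightarrow> complex poly" where
  "outer_poly e = (\<Sum>k<c. smult (e ^ k / e ^ c) (U k)) + R + smult e (monom 1 N)"

definition middle_poly :: "complex \<Rightarrow> complex poly" where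
  "middle_poly e = monom ((-1) ^ b * e ^ (c * b + 1)) b"

definition inner_poly :: "complex \<Rightarrow> complex poly" where
  "inner_poly e = smult (-1 / e ^ c) V"

lemma ueval_inner_poly: "ueval (inner_poly e) y = const2 (-1 / e ^ c) * ueval V y"
  by (simp only: inner_poly_def ueval_smult)

lemma poly_curve_y_at:
  assumes "e \<noteq> 0"
  shows "y0 + ueval (middle_poly e) (x0 + ueval (inner_poly e) y0) = poly curve_y (const2 e)"
proof -
  let ?V0 = "ueval V y0" and ?u = "x0 + const2 (-1 / e ^ c) * ueval V y0"
  have "(-1) ^ b * e ^ (c * b + 1) = e * (- (e ^ c)) ^ b"
    by (simp add: power_minus[of "e ^ c"] power_add mult_ac flip: power_mult)
  then have "ueval (middle_poly e) ?u = const2 e * (const2 (- (e ^ c)) * ?u) ^ b"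
    by (simp only: middle_poly_def ueval_monom const2_mult const2_power power_mult_distrib mult.assoc)
  also have "const2 (- (e ^ c)) * ?u = ?V0 - const2 e ^ c * x0"
  proof -
    have "const2 e ^ c * const2 (1 / e ^ c) = 1"
      using assms by (simp flip: const2_mult const2_power)
    then show ?thesis
      by (simp add: const2_uminus const2_power right_diff_distrib mult.assoc[symmetric])
  qed
  finally show ?thesis
    by (simp add: ueval_inner_poly curve_y_def poly_monom mult.commute)
qed

lemma poly_curve_x_at:
  assumes "e \<noteq> 0"
  shows "x0 + ueval (inner_poly e) y0 + ueval (outer_poly e) (poly curve_y (const2 e)) = poly curve_x (const2 e)"
proof -
  let ?z = "const2 e" and ?y = "poly curve_y (const2 e)"
  have zc: "?z ^ c = const2 (e ^ c)" by (simp add: const2_power)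
  have "?z ^ c * (const2 (e ^ k / e ^ c) * X) = ?z ^ k * X" for k X
  proof -
    have "e ^ c * (e ^ k / e ^ c) = e ^ k" using assms by simp
    then have "?z ^ c * const2 (e ^ k / e ^ c) = ?z ^ k" by (metis const2_mult const2_power)
    then show ?thesis by (simp only: mult.assoc[symmetric])
  qed
  then have "?z ^ c * (\<Sum>k<c. const2 (e ^ k / e ^ c) * ueval (U k) ?y) = (\<Sum>k<c. ?z ^ k * ueval (U k) ?y)"
    by (simp only: sum_distrib_left)
  then have "?z ^ c * ueval (outer_poly e) ?y
      = (\<Sum>k<c. ?z ^ k * ueval (U k) ?y) + ?z ^ c * ueval R ?y + ?z ^ Suc c * ueval (monom 1 N) ?y"
    by (simp add: outer_poly_def ueval_add ueval_sum ueval_smult distrib_left mult.left_commute)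
  moreover have "?z ^ c * (x0 + ueval (inner_poly e) y0) = ?z ^ c * x0 - ueval V y0"
  proof -
    have "const2 (e ^ c) * const2 (-1 / e ^ c) = -1"
      using assms by (simp add: const2_uminus flip: const2_mult)
    then show ?thesis
      unfolding ueval_inner_poly zc by (simp add: distrib_left mult.assoc[symmetric])
  qed
  ultimately have "?z ^ c * (x0 + ueval (inner_poly e) y0 + ueval (outer_poly e) ?y) = poly curve_x_scaled ?z"
    by (simp add: distrib_left curve_x_scaled_def poly_sum poly_monom poly_ueval_poly mult.commute)
  also have "\<dots> = ?z ^ c * poly curve_x ?z"
    by (simp add: curve_x_scaled_eq poly_monom)
  finally show ?thesis
    using assms by simp
qed

lemma comp_list_outer_middle_inner:
  assumes "e \<noteq> 0"
  shows "comp_list [A, triang_P 1 (outer_poly e) 1 0, swap_aut, triang_P 1 (middle_poly e) 1 0, swap_aut,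
      triang_P 1 (inner_poly e) 1 0, (x0, y0)] = comp_aut A (poly curve_x (const2 e), poly curve_y (const2 e))"
  unfolding comp_list_swaps poly_curve_y_at[OF assms, symmetric] poly_curve_x_at[OF assms, symmetric] ..

lemma infinite_outer_poly_degree:
  assumes "\<forall>k<c. degree (U k) \<le> N" "degree R \<le> N"
  shows "infinite {e. e \<noteq> 0 \<and> degree (outer_poly e) = N}"
proof -
  txt \<open>\<open>e\<^sup>c\<close> times the coefficient of \<open>Y\<^sup>N\<close> in \<open>outer_poly e\<close> is \<open>\<pi>(e)\<close>, and the summand
    \<open>e Y\<^sup>N\<close> of \<open>outer_poly e\<close> makes \<open>\<pi> \<noteq> 0\<close>.\<close>
  define \<pi> where "\<pi> = (\<Sum>k<c. monom (coeff (U k) N) k) + monom (coeff R N) c + monom 1 (Suc c)"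
  have coeff_outer_poly: "coeff (outer_poly e) j = (\<Sum>k<c. e ^ k / e ^ c * coeff (U k) j) + coeff R j + e * coeff (monom 1 N) j"
    for e j by (simp add: outer_poly_def coeff_sum)
  have "degree (outer_poly e) = N" if e: "e \<noteq> 0" "poly \<pi> e \<noteq> 0" for e
  proof (rule antisym)
    show "degree (outer_poly e) \<le> N"
      using assms by (intro degree_le) (auto simp: coeff_outer_poly coeff_eq_0 intro!: sum.neutral)
    have "e ^ c * coeff (outer_poly e) N = poly \<pi> e"
      using e(1) by (simp add: coeff_outer_poly \<pi>_def distrib_left sum_distrib_left poly_sum poly_monom mult_ac)
    then show "N \<le> degree (outer_poly e)"
      using e(2) by (intro le_degree) auto
  qed
  then have "UNIV - ({0} \<union> {e. poly \<pi> e = 0}) \<subseteq> {e. e \<noteq> 0 \<and> degree (outer_poly e) = N}"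
    by auto
  moreover have "\<pi> \<noteq> 0"
  proof -
    have "coeff \<pi> (Suc c) = 1" by (simp add: \<pi>_def coeff_sum)
    then show ?thesis by auto
  qed
  then have "infinite (UNIV - ({0} \<union> {e. poly \<pi> e = 0}))"
    by (intro Diff_infinite_finite) (simp_all add: poly_roots_finite infinite_UNIV_char_0)
  ultimately show ?thesis
    using infinite_super by blast
qed

lemma limit_in_zclosure:
  assumes "A0 \<in> affine_aut" "(x0, y0) \<in> affine_aut" "\<forall>k<c. degree (U k) \<le> N" "degree R \<le> N"
    and "comp_aut A0 (coeff curve_x 0, coeff curve_y 0) \<in> GG"
  shows "comp_aut A0 (coeff curve_x 0, coeff curve_y 0) \<in> zclosure (Gpd [N, b, degree V])"
proof -
  define \<phi> where "\<phi> e = comp_aut A0 (poly curve_x (const2 e), poly curve_y (const2 e))" for e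
  have "poly_curve \<phi>"
    unfolding \<phi>_def by (intro poly_curve_comp_affine assms(1)) (auto simp: poly_curve_def)
  moreover have "\<phi> 0 = comp_aut A0 (coeff curve_x 0, coeff curve_y 0)"
    by (simp add: \<phi>_def poly_0_coeff_0)
  moreover have "\<phi> e \<in> Gpd [N, b, degree V]" if "e \<in> {e. e \<noteq> 0 \<and> degree (outer_poly e) = N}" for e
  proof -
    from that have e: "e \<noteq> 0" "degree (outer_poly e) = N" by auto
    have "degree (middle_poly e) = b" "degree (inner_poly e) = degree V"
      using e(1) by (simp_all add: middle_poly_def inner_poly_def degree_monom_eq)
    then show ?thesis
      using comp_list_swaps_in_Gpd[OF assms(1,2), of "outer_poly e" "middle_poly e" "inner_poly e"]
      unfolding \<phi>_def comp_list_outer_middle_inner[OF e(1)] e(2) by simp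
  qed
  ultimately show ?thesis
    using poly_curve_limit_in_zclosure[OF infinite_outer_poly_degree[OF assms(3,4)]] assms(5) by metis
qed

end


theorem mainTheorem1:
  fixes a b c d :: nat
  assumes "a \<ge> 2" and "b \<ge> 2" and "c \<ge> 1" and "d = a * b - 1"
  shows "Gpd [c * d + a] \<subseteq> zclosure (Gpd [c * d - 1, b, a])"
proof
  fix \<psi> assume \<psi>: "\<psi> \<in> Gpd [c * d + a]"
  then obtain A0 x0 y0 T where A0: "A0 \<in> affine_aut" and A1: "(x0, y0) \<in> affine_aut"
    and T: "degree T = c * d + a" and \<psi>_eq: "\<psi> = comp_aut A0 (x0 + ueval T y0, y0)"
    by (rule Gpd_singletonE)
  have "2 * a \<le> a * b" using assms(2) by simp
  then have ab: "a * b = d + 1" and d: "a + 1 \<le> d" using assms(1,4) by linarith+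
  obtain V where V: "degree V = a" "degree (T + lagrange_term V (V ^ b) c) \<le> c * d - 1"
    using exists_cancelling_lagrange_term[OF T ab assms(3)] d by auto
  interpret degeneration V "T + lagrange_term V (V ^ b) c" b c "c * d - 1" x0 y0
    using assms(3) by unfold_locales
  have "\<forall>k<c. degree (U k) \<le> c * d - 1"
    using degree_lagrange_term_low[OF V(1) ab d] by (simp add: U_def)
  moreover have "\<psi> = comp_aut A0 (coeff curve_x 0, coeff curve_y 0)"
    unfolding \<psi>_eq coeff_0_curve_x coeff_0_curve_y by (simp add: U_def ueval_add)
  moreover have "\<psi> \<in> GG" using \<psi> Gpd_subset_GG by blast
  ultimately show "\<psi> \<in> zclosure (Gpd [c * d - 1, b, a])"
    using limit_in_zclosure[OF A0 A1] V by metis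
qed

end
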